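(* Let $q\geq 3$ be an odd prime power and $m\geq 2$. Then the second largest odd coset leader modulo $q^m-1$ is $$\delta_2=(q-1)q^{m-1}-q^{\lfloor\frac{2m-1}{3}\rfloor}-q^{\lfloor\frac{m-1}{3}\rfloor}-1.$$
   Context: The $q$-cyclotomic coset of $i$ modulo $q^m-1$ is $\{i,iq,iq^2,\ldots\}\bmod(q^m-1)$; its smallest element is its coset leader. An odd coset leader is a coset leader that is an odd integer. *)

theory Defs
  imports "HOL-Computational_Algebra.Primes"
begin

definition cyc_coset :: "nat \<Rightarrow> nat \<Rightarrow> nat \<Rightarrow> nat set" where
  "cyc_coset q m i = {(i * q ^ j) mod (q ^ m - 1) | j. True}"

definition coset_leader :: "nat \<Rightarrow> nat \<Rightarrow> nat \<Rightarrow> bool" where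
  "coset_leader q m i \<longleftrightarrow> i < q ^ m - 1 \<and> (\<forall>x \<in> cyc_coset q m i. i \<le> x)"

definition odd_coset_leaders :: "nat \<Rightarrow> nat \<Rightarrow> nat set" where
  "odd_coset_leaders q m = {i. coset_leader q m i \<and> odd i}"

definition prime_power :: "nat \<Rightarrow> bool" where
  "prime_power q \<longleftrightarrow> (\<exists>p k. prime p \<and> k \<ge> 1 \<and> q = p ^ k)"

end

theory Submission
  imports Defs
begin

text \<open>Let n = q^m - 1. For 0 < x < n, x is a coset leader iff its digitwise complement
n - x is the largest element of its cyclotomic coset ("coset maximal"), and as n is even both
have the same parity. Multiplication by q rotates the m base-q digits cyclically. So the claim
is that the two smallest odd coset maximal numbers are q^(m-1) and
y = q^(m-1) + q^a + q^b, where a = (2m-1) div 3 and b = (m-1) div 3.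

That y is coset maximal comes from the cyclic gaps m-1-a, a-b, b+1 between its three nonzero
digits being nondecreasing; for q >= 3 there are no carries, so sums of three powers of q
compare like their exponents. Conversely, a coset maximal z < n has top digit at position m-1,
so if z < y is odd and z \<noteq> q^(m-1), then z = q^(m-1) + r with r even and nonzero. Hence
r = q^k + s with s odd, and s has a lowest nonzero digit, say at position l. Rotating the digit
at position k to the top gives l + (m-1-k) <= k, rotating the one at position l gives
m-2-l <= k; together with r < q^a + q^b this forces k = a = m-2-l and then a < 2b,
contradicting a >= 2b.\<close>

lemma power_split:
  fixes q i j n :: nat
  assumes "i + j = n"
  shows "q ^ n = q ^ i * q ^ j"
  unfolding assms[symmetric] by (rule power_add)

lemma power_less_power_Suc_imp_le:
  fixes q i k :: nat
  assumes "2 \<le> q" and "q ^ i < q ^ (k + 1)"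
  shows "i \<le> k"
  using assms power_strict_increasing_iff[of q i "k + 1"] by simp

lemma double_power_le_power_Suc:
  fixes q k :: nat
  assumes "2 \<le> q"
  shows "2 * q ^ k \<le> q ^ (k + 1)"
  using mult_le_mono1[OF assms, of "q ^ k"] by simp

lemma power_add_power_less_power:
  fixes q c d a :: nat
  assumes "q \<ge> 3" "c < a" "d < a"
  shows "q ^ c + q ^ d < q ^ a"
proof -
  have "q ^ c \<le> q ^ (a - 1)" "q ^ d \<le> q ^ (a - 1)" "0 < q ^ (a - 1)"
    using assms by (simp_all add: power_increasing)
  moreover have "3 * q ^ (a - 1) \<le> q * q ^ (a - 1)"
    using assms(1) by (rule mult_le_mono1)
  moreover have "q * q ^ (a - 1) = q ^ a"
    using assms(2) by (cases a) simp_all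
  ultimately show ?thesis
    by linarith
qed

lemma three_powers_le_power:
  fixes q i j k t :: nat
  assumes "q \<ge> 3" "i < t" "j < t" "k < t"
  shows "q ^ i + q ^ j + q ^ k \<le> q ^ t"
proof -
  have "q ^ i \<le> q ^ (t - 1)" "q ^ j \<le> q ^ (t - 1)" "q ^ k \<le> q ^ (t - 1)"
    using assms by (simp_all add: power_increasing)
  moreover have "3 * q ^ (t - 1) \<le> q * q ^ (t - 1)"
    using assms(1) by (rule mult_le_mono1)
  moreover have "q * q ^ (t - 1) = q ^ t"
    using assms(2) by (cases t) simp_all
  ultimately show ?thesis
    by linarith
qed

lemma three_powers_le_lex:
  fixes q e1 e2 e3 t a b :: nat
  assumes q: "q \<ge> 3" and e: "e1 \<le> t" "e2 < t" "e3 < t"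
    and top: "e1 = t \<Longrightarrow> e2 \<le> a \<and> e3 \<le> b \<and> e3 < a"
  shows "q ^ e1 + q ^ e2 + q ^ e3 \<le> q ^ t + q ^ a + q ^ b"
proof (cases "e1 = t")
  case True
  have "q ^ e2 + q ^ e3 \<le> q ^ a + q ^ b"
  proof (cases "e2 = a")
    case True
    then show ?thesis
      using top \<open>e1 = t\<close> q by (simp add: power_increasing)
  next
    case False
    then have "q ^ e2 + q ^ e3 < q ^ a"
      using top \<open>e1 = t\<close> q by (intro power_add_power_less_power) auto
    then show ?thesis by simp
  qed
  with True show ?thesis by simp
next
  case False
  then have "q ^ e1 + q ^ e2 + q ^ e3 \<le> q ^ t"
    using q e by (intro three_powers_le_power) auto
  then show ?thesis by simp
qed

lemma three_powers_less:
  fixes q m a b :: nat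
  assumes q: "q \<ge> 3" and ab: "b < a" "a < m"
  shows "q ^ (m - 1) + q ^ a + q ^ b < q ^ m - 1"
proof -
  define k where "k = m - 2"
  have m: "m - 1 = k + 1" "m = k + 2"
    using ab by (simp_all add: k_def)
  have "q ^ a \<le> q ^ (k + 1)" "q ^ b \<le> q ^ k"
    using q ab m by (intro power_increasing; simp)+
  moreover have "1 \<le> q ^ k"
    using q by simp
  moreover have "3 * q ^ k \<le> q ^ (k + 1)" "3 * q ^ (k + 1) \<le> q ^ (k + 2)"
    using mult_le_mono1[OF q, of "q ^ k"] mult_le_mono1[OF q, of "q ^ (k + 1)"] by simp_all
  ultimately show ?thesis
    unfolding m(1) unfolding m(2) by linarith
qed

section \<open>Coset maxima and rotation of base-q digits\<close>

definition coset_maximal :: "nat \<Rightarrow> nat \<Rightarrow> nat \<Rightarrow> bool" where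
  "coset_maximal q m y \<longleftrightarrow> (\<forall>j. (y * q ^ j) mod (q ^ m - 1) \<le> y)"

lemma rotate_mod:
  fixes q m p A B y :: nat
  assumes y: "y = A * q ^ p + B" and p: "0 < p" "p < m" and B: "B < q ^ p"
    and y_less: "y < q ^ m - 1"
  shows "(y * q ^ (m - p)) mod (q ^ m - 1) = B * q ^ (m - p) + A"
proof -
  define X Y where "X = q ^ (m - p)" and "Y = q ^ p"
  have XY: "X * Y = q ^ m"
    using p by (simp add: X_def Y_def power_add[symmetric])
  have y1: "A * Y + B + 1 < X * Y"
    using y y_less XY unfolding Y_def by linarith
  then have "A < X"
    by (metis add_lessD1 mult_less_cancel2)
  have low: "B * X + A + 1 < X * Y"
  proof (cases "A + 1 < X")
    case True
    have "(B + 1) * X \<le> Y * X"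
      using B Y_def by (intro mult_le_mono1) simp
    with True show ?thesis by (simp add: algebra_simps)
  next
    case False
    with \<open>A < X\<close> have A: "A + 1 = X" by simp
    with y1 have "B + 1 < Y"
      using B Y_def by (auto simp: algebra_simps)
    then have "(B + 1) * X < Y * X"
      using A by (intro mult_less_mono1) auto
    with A show ?thesis by (simp add: algebra_simps)
  qed
  obtain k where "X * Y = Suc k"
    using low by (cases "X * Y") auto
  then have "y * X = A * (X * Y - 1) + (B * X + A)"
    by (simp add: y Y_def[symmetric] algebra_simps)
  with low XY show ?thesis
    by (simp add: X_def)
qed

lemma coset_maximal_rotate:
  fixes q m p A B y :: nat
  assumes "coset_maximal q m y" and "y = A * q ^ p + B" and "0 < p" "p < m" and "B < q ^ p"
    and "y < q ^ m - 1"
  shows "B * q ^ (m - p) + A \<le> y"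
  using assms rotate_mod[of y A q p B m] unfolding coset_maximal_def by metis

lemma coset_maximalI:
  fixes q m y :: nat
  assumes y: "y < q ^ m - 1"
    and rot: "\<And>p. 0 < p \<Longrightarrow> p < m \<Longrightarrow> (y * q ^ (m - p)) mod (q ^ m - 1) \<le> y"
  shows "coset_maximal q m y"
  unfolding coset_maximal_def
proof
  fix j
  define n where "n = q ^ m - 1"
  have "m \<noteq> 0"
    using y by (cases m) auto
  have "q ^ m = Suc n"
    using y by (simp add: n_def)
  then have "q ^ m mod n = 1 mod n"
    by (metis mod_Suc_eq mod_self One_nat_def)
  then have "(q ^ m) ^ (j div m) mod n = 1 mod n"
    by (metis power_mod power_one)
  have "q ^ j = q ^ (j mod m) * (q ^ m) ^ (j div m)"
    by (simp add: power_add[symmetric] power_mult[symmetric])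
  then have "(y * q ^ j) mod n = (y * q ^ (j mod m) * (q ^ m) ^ (j div m)) mod n"
    by (simp only: mult.assoc)
  also have "\<dots> = (y * q ^ (j mod m) * ((q ^ m) ^ (j div m) mod n)) mod n"
    by (simp only: mod_mult_right_eq)
  also have "\<dots> = (y * q ^ (j mod m)) mod n"
    by (simp only: \<open>(q ^ m) ^ (j div m) mod n = 1 mod n\<close> mod_mult_right_eq mult_1_right)
  finally have "(y * q ^ j) mod n = (y * q ^ (j mod m)) mod n" .
  moreover have "(y * q ^ (j mod m)) mod n \<le> y"
  proof (cases "j mod m = 0")
    case True
    then show ?thesis by simp
  next
    case False
    with \<open>m \<noteq> 0\<close> show ?thesis
      using rot[of "m - j mod m"] by (simp add: n_def)
  qed
  ultimately show "(y * q ^ j) mod (q ^ m - 1) \<le> y"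
    by (simp add: n_def)
qed

lemma mod_add_complement_mult:
  fixes n c x :: nat
  assumes "coprime n c" and "0 < x" "x < n"
  shows "(x * c) mod n + ((n - x) * c) mod n = n"
proof -
  have nonzero: "(x * c) mod n \<noteq> 0"
    using assms by (auto simp: mod_eq_0_iff_dvd coprime_dvd_mult_left_iff dest: nat_dvd_not_less)
  have "((x * c) mod n + ((n - x) * c) mod n) mod n = (n * c) mod n"
    using assms by (simp add: mod_add_eq add_mult_distrib[symmetric])
  then obtain k where k: "(x * c) mod n + ((n - x) * c) mod n = n * k"
    by (metis mod_mult_self1_is_0 mod_0_imp_dvd dvdE)
  have "0 < k"
    using k nonzero by (metis add_is_0 gr0I mult_0_right)
  moreover have "n * k < n * 2"
    using k assms mod_less_divisor[of n "x * c"] mod_less_divisor[of n "(n - x) * c"] by linarith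
  then have "k < 2"
    by simp
  ultimately show ?thesis
    using k by (simp add: numeral_2_eq_2 less_Suc_eq)
qed

lemma coset_leader_iff_coset_maximal:
  fixes q m x :: nat
  assumes x: "0 < x" "x < q ^ m - 1"
  shows "coset_leader q m x \<longleftrightarrow> coset_maximal q m (q ^ m - 1 - x)"
proof -
  define n where "n = q ^ m - 1"
  have "1 < q ^ m"
    using x by linarith
  then have "q ^ m = q * q ^ (m - 1)"
    by (cases m) auto
  moreover have "coprime n (q ^ m)"
    unfolding n_def by (intro coprime_diff_one_left_nat) (use \<open>1 < q ^ m\<close> in linarith)
  ultimately have "coprime n q"
    by (metis coprime_mult_right_iff)
  then have "(x * q ^ j) mod n + ((n - x) * q ^ j) mod n = n" for j
    using x by (intro mod_add_complement_mult) (simp_all add: n_def)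
  moreover have "x \<le> A \<longleftrightarrow> B \<le> n - x" if "A + B = n" for A B
    using that x by (simp add: n_def) arith
  ultimately have "x \<le> (x * q ^ j) mod n \<longleftrightarrow> ((n - x) * q ^ j) mod n \<le> n - x" for j
    by blast
  then show ?thesis
    using x unfolding coset_leader_def coset_maximal_def cyc_coset_def n_def[symmetric]
    by auto
qed

lemma odd_coset_leader_complement_iff:
  fixes q m y :: nat
  assumes q: "odd q" and y: "0 < y" "y < q ^ m - 1"
  shows "q ^ m - 1 - y \<in> odd_coset_leaders q m \<longleftrightarrow> coset_maximal q m y \<and> odd y"
proof -
  have "coset_leader q m (q ^ m - 1 - y) \<longleftrightarrow> coset_maximal q m y"
    using coset_leader_iff_coset_maximal[of "q ^ m - 1 - y" q m] y by simp
  moreover have "even (q ^ m - 1)"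
    using q by simp
  moreover have "(q ^ m - 1 - y) + y = q ^ m - 1"
    using y by simp
  ultimately show ?thesis
    unfolding odd_coset_leaders_def by (metis even_add mem_Collect_eq)
qed

section \<open>Two coset maximal numbers\<close>

lemma coset_maximal_top_power:
  fixes q m :: nat
  assumes q: "q \<ge> 2" and m: "m \<ge> 2"
  shows "coset_maximal q m (q ^ (m - 1))"
proof (rule coset_maximalI)
  have "q \<le> q ^ (m - 1)"
    using q m by (simp add: self_le_power)
  moreover have "q ^ m = q * q ^ (m - 1)"
    using m by (cases m) simp_all
  moreover have "2 * q ^ (m - 1) \<le> q * q ^ (m - 1)"
    using q by simp
  ultimately show "q ^ (m - 1) < q ^ m - 1"
    using q by linarith
  fix p
  assume p: "0 < p" "p < m"
  have "q ^ (m - 1) = q ^ (m - 1 - p) * q ^ p + 0"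
    using p by (simp add: power_add[symmetric])
  then have "(q ^ (m - 1) * q ^ (m - p)) mod (q ^ m - 1) = 0 * q ^ (m - p) + q ^ (m - 1 - p)"
    using p \<open>q ^ (m - 1) < q ^ m - 1\<close> q by (intro rotate_mod) auto
  then show "(q ^ (m - 1) * q ^ (m - p)) mod (q ^ m - 1) \<le> q ^ (m - 1)"
    using q by (simp add: power_increasing)
qed

text \<open>The hypotheses gaps state m-1-a <= a-b <= b+1 without truncated subtraction.\<close>

lemma coset_maximal_three_powers:
  fixes q m a b :: nat
  assumes q: "q \<ge> 3" and ab: "b < a" "a < m"
    and gaps: "m + b \<le> 2 * a + 1" "a \<le> 2 * b + 1"
  shows "coset_maximal q m (q ^ (m - 1) + q ^ a + q ^ b)"
proof (rule coset_maximalI)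
  define y where "y = q ^ (m - 1) + q ^ a + q ^ b"
  show y_less: "y < q ^ m - 1"
    unfolding y_def using q ab by (rule three_powers_less)
  fix p
  assume p: "0 < p" "p < m"
  have split: "q ^ e = q ^ (e - p) * q ^ p" if "p \<le> e" for e
    using that by (intro power_split) simp
  consider "p \<le> b" | "b < p" "p \<le> a" | "a < p"
    by linarith
  then show "(y * q ^ (m - p)) mod (q ^ m - 1) \<le> y"
  proof cases
    case 1
    have dec: "y = (q ^ (m - 1 - p) + q ^ (a - p) + q ^ (b - p)) * q ^ p + 0"
      using 1 ab p split[of "m - 1"] split[of a] split[of b] by (simp add: y_def algebra_simps)
    have "(y * q ^ (m - p)) mod (q ^ m - 1) = q ^ (m - 1 - p) + q ^ (a - p) + q ^ (b - p)"
      using rotate_mod[OF dec p _ y_less] q by simp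
    also have "\<dots> \<le> y"
      unfolding y_def using q ab p by (intro three_powers_le_lex) auto
    finally show ?thesis .
  next
    case 2
    have dec: "y = (q ^ (m - 1 - p) + q ^ (a - p)) * q ^ p + q ^ b"
      using 2 ab p split[of "m - 1"] split[of a] by (simp add: y_def algebra_simps)
    have "q ^ b < q ^ p"
      using 2 q by simp
    then have "(y * q ^ (m - p)) mod (q ^ m - 1)
        = q ^ (b + (m - p)) + q ^ (m - 1 - p) + q ^ (a - p)"
      using rotate_mod[OF dec p _ y_less] by (simp add: power_add)
    also have "\<dots> \<le> y"
      unfolding y_def using q ab p 2 gaps by (intro three_powers_le_lex) auto
    finally show ?thesis .
  next
    case 3
    have dec: "y = q ^ (m - 1 - p) * q ^ p + (q ^ a + q ^ b)"
      using 3 p split[of "m - 1"] by (simp add: y_def algebra_simps)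
    have "q ^ a + q ^ b < q ^ p"
      using q ab 3 by (intro power_add_power_less_power) auto
    then have "(y * q ^ (m - p)) mod (q ^ m - 1)
        = q ^ (a + (m - p)) + q ^ (b + (m - p)) + q ^ (m - 1 - p)"
      using rotate_mod[OF dec p _ y_less] by (simp add: power_add algebra_simps)
    also have "\<dots> \<le> y"
      unfolding y_def using q ab p 3 gaps by (intro three_powers_le_lex) auto
    finally show ?thesis .
  qed
qed

section \<open>Odd coset maxima below q^(m-1) + q^a + q^b\<close>

lemma coset_maximal_ge_top_power:
  fixes q m y :: nat
  assumes q: "q \<ge> 2" and max: "coset_maximal q m y" and y: "0 < y" "y < q ^ m - 1"
  shows "q ^ (m - 1) \<le> y"
proof (rule ccontr)
  assume "\<not> q ^ (m - 1) \<le> y"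
  then have small: "y < q ^ (m - 1)"
    by simp
  obtain k where k: "q ^ k \<le> y" "y < q ^ (k + 1)"
    using ex_power_ivl1[OF q, of y] y by auto
  have "q ^ k < q ^ (m - 1)"
    using k small by linarith
  then have km: "k + 1 < m"
    using q by simp
  have "y * q ^ (m - (k + 1)) + 0 \<le> y"
    using coset_maximal_rotate[OF max, where A = 0 and B = y and p = "k + 1"] k km y by simp
  moreover have "q ^ (m - 1) = q ^ k * q ^ (m - (k + 1))"
    using km by (simp add: power_add[symmetric])
  moreover have "q ^ k * q ^ (m - (k + 1)) \<le> y * q ^ (m - (k + 1))"
    using k by simp
  ultimately show False
    using small by linarith
qed

lemma coset_maximal_rotate_digit:
  fixes q m y C d l :: nat
  assumes max: "coset_maximal q m y" and y: "y = C * q ^ (l + 1) + d * q ^ l" "y < q ^ m - 1"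
    and d: "0 < d" "d < q" and l: "l + 1 < m"
  shows "q ^ (m - 1) + C \<le> y"
proof -
  have "d * q ^ l < q ^ (l + 1)"
    using d by simp
  then have "d * q ^ l * q ^ (m - (l + 1)) + C \<le> y"
    using coset_maximal_rotate[OF max y(1)] y(2) l by simp
  moreover have "q ^ (m - 1) = q ^ l * q ^ (m - (l + 1))"
    using l by (simp add: power_add[symmetric])
  then have "q ^ (m - 1) \<le> d * q ^ l * q ^ (m - (l + 1))"
    using d by simp
  ultimately show ?thesis
    by linarith
qed

lemma coset_maximal_leading_digit:
  fixes q m y r k :: nat
  assumes q: "q \<ge> 2" and max: "coset_maximal q m y"
    and y: "y = q ^ (m - 1) + r" "y < q ^ m - 1"
    and r: "q ^ k \<le> r" "r < q ^ (k + 1)" and k: "k + 1 < m"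
  shows "r < 2 * q ^ k" and "(r - q ^ k) * q ^ (m - 1 - k) + q ^ (m - 2 - k) \<le> r"
proof -
  have top: "q ^ (m - 1) = q ^ k * q ^ (m - 1 - k)" "q ^ (m - 1) = q ^ (m - 2 - k) * q ^ (k + 1)"
    by (rule power_split; use k in simp)+
  have "r * q ^ (m - (k + 1)) + q ^ (m - 2 - k) \<le> y"
    using coset_maximal_rotate[OF max, where A = "q ^ (m - 2 - k)" and B = r and p = "k + 1"]
      y r k top(2) by simp
  then have rot: "r * q ^ (m - 1 - k) + q ^ (m - 2 - k) \<le> q ^ (m - 1) + r"
    using y by simp
  have "q ^ (k + 1) \<le> q ^ (m - 1)"
    using q k by (intro power_increasing) auto
  show "r < 2 * q ^ k"
  proof (rule ccontr)
    assume "\<not> r < 2 * q ^ k"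
    then have "2 * q ^ k * q ^ (m - 1 - k) \<le> r * q ^ (m - 1 - k)"
      by (intro mult_le_mono1) simp
    then have "2 * q ^ (m - 1) \<le> r * q ^ (m - 1 - k)"
      using top(1) by simp
    then show False
      using rot r \<open>q ^ (k + 1) \<le> q ^ (m - 1)\<close> by linarith
  qed
  have "r * q ^ (m - 1 - k) = (r - q ^ k) * q ^ (m - 1 - k) + q ^ (m - 1)"
    using r top(1) by (simp add: diff_mult_distrib)
  then show "(r - q ^ k) * q ^ (m - 1 - k) + q ^ (m - 2 - k) \<le> r"
    using rot by linarith
qed

lemma coset_maximal_lowest_digit:
  fixes q m y k l u :: nat
  assumes q: "q \<ge> 2" and max: "coset_maximal q m y"
    and y: "y = q ^ (m - 1) + q ^ k + q ^ l * u" "y < q ^ m - 1"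
    and u: "\<not> q dvd u" and kl: "l < k" "k + 1 < m"
  shows "q ^ (m - 2 - l) + q ^ (k - l - 1) \<le> q ^ k + q ^ l * u"
proof -
  define C where "C = q ^ (m - 2 - l) + q ^ (k - l - 1) + u div q"
  have "q ^ l * u = q ^ l * (q * (u div q) + u mod q)"
    by simp
  also have "\<dots> = (u div q) * q ^ (l + 1) + (u mod q) * q ^ l"
    by (simp only: distrib_left power_add power_one_right ac_simps)
  moreover have "q ^ (m - 1) = q ^ (m - 2 - l) * q ^ (l + 1)"
    "q ^ k = q ^ (k - l - 1) * q ^ (l + 1)"
    by (rule power_split; use kl in simp)+
  ultimately have "y = C * q ^ (l + 1) + (u mod q) * q ^ l"
    unfolding y(1) C_def by (simp only: distrib_right add.assoc)
  moreover have "0 < u mod q" "u mod q < q"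
    using u q by (simp_all add: mod_greater_zero_iff_not_dvd)
  ultimately have "q ^ (m - 1) + C \<le> y"
    using coset_maximal_rotate_digit[OF max] y(2) kl by simp
  then show ?thesis
    using y(1) by (simp add: C_def)
qed

lemma coset_maximal_even_excess:
  fixes q m r :: nat
  assumes q: "q \<ge> 2" "odd q" and max: "coset_maximal q m (q ^ (m - 1) + r)"
    and y: "q ^ (m - 1) + r < q ^ m - 1"
    and r: "even r" "0 < r" "r < q ^ (m - 1)"
  obtains k l s where "r = q ^ k + s" "s < q ^ k" "q ^ l \<le> s" "l + (m - 1 - k) \<le> k"
    "q ^ (m - 2 - l) + q ^ (k - l - 1) \<le> r"
proof -
  obtain k where k: "q ^ k \<le> r" "r < q ^ (k + 1)"
    using ex_power_ivl1[OF q(1), of r] r by auto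
  have "q ^ k < q ^ (m - 1)"
    using k r by linarith
  then have km: "k + 1 < m"
    using q by simp
  define s where "s = r - q ^ k"
  have lead: "r < 2 * q ^ k" "s * q ^ (m - 1 - k) + q ^ (m - 2 - k) \<le> r"
    using coset_maximal_leading_digit[OF q(1) max refl y k km] by (simp_all add: s_def)
  have r_s: "r = q ^ k + s" "s < q ^ k"
    using k lead(1) by (simp_all add: s_def)
  have "odd s"
    using r(1) q(2) r_s(1) by simp
  moreover have "\<not> is_unit q"
    using q by simp
  ultimately obtain l u where s: "s = q ^ l * u" "\<not> q dvd u"
    using multiplicity_decompose'[of s q] by (metis odd_pos not_gr0)
  have "q ^ l \<le> s"
    using s \<open>odd s\<close> by (cases u) auto
  then have "q ^ l < q ^ k"
    using r_s(2) by linarith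
  then have "l < k"
    using q by simp
  have "q ^ (l + (m - 1 - k)) \<le> s * q ^ (m - 1 - k)"
    using \<open>q ^ l \<le> s\<close> by (simp add: power_add)
  also have "\<dots> < q ^ (k + 1)"
    using lead double_power_le_power_Suc[OF q(1), of k] by linarith
  finally have "l + (m - 1 - k) \<le> k"
    by (rule power_less_power_Suc_imp_le[OF q(1)])
  moreover have "q ^ (m - 2 - l) + q ^ (k - l - 1) \<le> r"
    using coset_maximal_lowest_digit[OF q(1) max _ y s(2) \<open>l < k\<close> km] r_s(1) s(1)
    by (simp add: add.assoc)
  ultimately show ?thesis
    using that r_s \<open>q ^ l \<le> s\<close> by blast
qed

lemma power_sum_le_of_digit_gaps:
  fixes q m r k l s :: nat
  assumes q: "q \<ge> 3" and m: "m \<ge> 1"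
    and r: "r = q ^ k + s" "s < q ^ k" "q ^ l \<le> s"
    and gaps: "l + (m - 1 - k) \<le> k" "q ^ (m - 2 - l) + q ^ (k - l - 1) \<le> r"
  shows "q ^ ((2 * m - 1) div 3) + q ^ ((m - 1) div 3) \<le> r"
proof (rule ccontr)
  define a b where "a = (2 * m - 1) div 3" and "b = (m - 1) div 3"
  assume "\<not> q ^ ((2 * m - 1) div 3) + q ^ ((m - 1) div 3) \<le> r"
  then have r_below: "r < q ^ a + q ^ b"
    by (simp add: a_def b_def)
  have ab: "3 * a + 1 \<le> 2 * m" "2 * m < 3 * a + 4" "3 * b + 1 \<le> m" "m < 3 * b + 4"
    unfolding a_def b_def using m by presburger+
  have q2: "q \<ge> 2"
    using q by simp
  have "b \<le> a"
    unfolding a_def b_def by (intro div_le_mono) simp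
  then have "q ^ a + q ^ b < q ^ (a + 1)"
    using q by (intro power_add_power_less_power) auto
  then have "q ^ k < q ^ (a + 1)"
    using r r_below by linarith
  then have "k \<le> a"
    by (rule power_less_power_Suc_imp_le[OF q2])
  have "q ^ (m - 2 - l) < q ^ (k + 1)"
    using gaps(2) r double_power_le_power_Suc[OF q2, of k] by linarith
  then have "m - 2 - l \<le> k"
    by (rule power_less_power_Suc_imp_le[OF q2])
  then have "k = a"
    using gaps(1) \<open>k \<le> a\<close> ab by linarith
  then have "s < q ^ b"
    using r r_below by simp
  then have "q ^ l < q ^ b"
    using r(3) by linarith
  then have "l < b"
    using q2 by simp
  then have "m - 2 - l = k"
    using \<open>m - 2 - l \<le> k\<close> \<open>k = a\<close> ab by linarith
  then have "q ^ (k - l - 1) < q ^ b"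
    using gaps(2) r \<open>s < q ^ b\<close> by simp
  then have "k - l - 1 < b"
    using q2 by simp
  then show False
    using \<open>l < b\<close> \<open>k = a\<close> ab by linarith
qed

lemma odd_coset_maximal_below_three_powers:
  fixes q m y :: nat
  assumes q: "q \<ge> 3" "odd q" and m: "m \<ge> 2"
    and max: "coset_maximal q m y" and "odd y" and y: "y < q ^ m - 1"
    and below: "y < q ^ (m - 1) + q ^ ((2 * m - 1) div 3) + q ^ ((m - 1) div 3)"
  shows "y = q ^ (m - 1)"
proof (rule ccontr)
  assume "y \<noteq> q ^ (m - 1)"
  have q2: "q \<ge> 2"
    using q by simp
  have "0 < y"
    using \<open>odd y\<close> by (rule odd_pos)
  then have "q ^ (m - 1) \<le> y"
    using coset_maximal_ge_top_power[OF q2 max _ y] by simp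
  then obtain r where y_r: "y = q ^ (m - 1) + r"
    using le_Suc_ex by blast
  have "0 < r" "even r"
    using \<open>y \<noteq> q ^ (m - 1)\<close> \<open>odd y\<close> q(2) y_r by simp_all
  have r_below: "r < q ^ ((2 * m - 1) div 3) + q ^ ((m - 1) div 3)"
    using below y_r by simp
  have "r < q ^ (m - 1)"
  proof (cases "m = 2")
    case True
    then have "r < q + 1" "r \<noteq> q"
      using r_below \<open>even r\<close> q(2) by auto
    then show ?thesis
      using True by simp
  next
    case False
    then have "(2 * m - 1) div 3 < m - 1" "(m - 1) div 3 < m - 1"
      using m by presburger+
    then have "q ^ ((2 * m - 1) div 3) + q ^ ((m - 1) div 3) < q ^ (m - 1)"
      using q by (intro power_add_power_less_power) auto
    then show ?thesis
      using r_below by linarith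
  qed
  then obtain k l s where "r = q ^ k + s" "s < q ^ k" "q ^ l \<le> s"
    "l + (m - 1 - k) \<le> k" "q ^ (m - 2 - l) + q ^ (k - l - 1) \<le> r"
    using coset_maximal_even_excess[OF q2 q(2)] max y y_r \<open>even r\<close> \<open>0 < r\<close> by metis
  then have "q ^ ((2 * m - 1) div 3) + q ^ ((m - 1) div 3) \<le> r"
    using q(1) m by (intro power_sum_le_of_digit_gaps) simp_all
  then show False
    using r_below by linarith
qed

lemma odd_coset_leaders_greater_complement:
  fixes q m y z :: nat
  assumes q: "odd q" and z: "coset_maximal q m z" "odd z" "z < y" and y: "y < q ^ m - 1"
    and unique: "\<And>w. coset_maximal q m w \<Longrightarrow> odd w \<Longrightarrow> w < y \<Longrightarrow> w = z"
  shows "{x \<in> odd_coset_leaders q m. q ^ m - 1 - y < x} = {q ^ m - 1 - z}"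
proof (intro equalityI subsetI)
  fix x
  assume "x \<in> {x \<in> odd_coset_leaders q m. q ^ m - 1 - y < x}"
  then have x: "x \<in> odd_coset_leaders q m" "q ^ m - 1 - y < x"
    by simp_all
  then have "0 < x" "x < q ^ m - 1"
    by (simp_all add: odd_coset_leaders_def odd_pos coset_leader_def)
  define w where "w = q ^ m - 1 - x"
  have w: "0 < w" "w < q ^ m - 1" "x = q ^ m - 1 - w"
    using \<open>0 < x\<close> \<open>x < q ^ m - 1\<close> by (simp_all add: w_def)
  then have "coset_maximal q m w" "odd w"
    using odd_coset_leader_complement_iff[OF q w(1,2)] x(1) by simp_all
  moreover have "w < y"
    using x(2) w by linarith
  ultimately have "w = z"
    by (rule unique)
  then show "x \<in> {q ^ m - 1 - z}"
    using w(3) by simp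
next
  fix x
  assume "x \<in> {q ^ m - 1 - z}"
  moreover have "0 < z"
    using z(2) by (rule odd_pos)
  ultimately show "x \<in> {x \<in> odd_coset_leaders q m. q ^ m - 1 - y < x}"
    using odd_coset_leader_complement_iff[OF q, where y = z] z y by simp
qed

theorem lemma18:
  fixes q m :: nat
  assumes "prime_power q" and "odd q" and "q \<ge> 3" and "m \<ge> 2"
  shows "\<exists>d. int d = (int q - 1) * int q ^ (m - 1) - int q ^ ((2 * m - 1) div 3)
                     - int q ^ ((m - 1) div 3) - 1
           \<and> d \<in> odd_coset_leaders q m
           \<and> card {x \<in> odd_coset_leaders q m. d < x} = 1"
proof -
  define a b where "a = (2 * m - 1) div 3" and "b = (m - 1) div 3"
  define y where "y = q ^ (m - 1) + q ^ a + q ^ b"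
  have "3 * a + 1 \<le> 2 * m" "2 * m < 3 * a + 4" "3 * b + 1 \<le> m" "m < 3 * b + 4"
    unfolding a_def b_def using assms(4) by presburger+
  then have ab: "b < a" "a < m" "m + b \<le> 2 * a + 1" "a \<le> 2 * b + 1"
    using assms(4) by presburger+
  have y: "coset_maximal q m y" "odd y" "y < q ^ m - 1" "q ^ (m - 1) < y"
    using coset_maximal_three_powers[OF assms(3) ab] three_powers_less[OF assms(3) ab(1,2)]
      assms(2,3) by (simp_all add: y_def)
  have "{x \<in> odd_coset_leaders q m. q ^ m - 1 - y < x} = {q ^ m - 1 - q ^ (m - 1)}"
    using assms(2-4) y coset_maximal_top_power[of q m]
      odd_coset_maximal_below_three_powers[OF assms(3,2,4)]
    by (intro odd_coset_leaders_greater_complement) (auto simp: y_def a_def b_def)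
  moreover have "q ^ m - 1 - y \<in> odd_coset_leaders q m"
    using odd_coset_leader_complement_iff[OF assms(2)] y odd_pos by blast
  moreover have "int q ^ m = int q * int q ^ (m - 1)"
    using assms(4) by (cases m) simp_all
  then have "int (q ^ m - 1 - y) = (int q - 1) * int q ^ (m - 1) - int q ^ a - int q ^ b - 1"
    using y(3) by (simp add: y_def algebra_simps)
  ultimately show ?thesis
    unfolding a_def b_def by (intro exI[of _ "q ^ m - 1 - y"]) simp
qed

end
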